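(* Let $\mathcal S=\{1,\dots,N\}$ with $N>1$, let $d\ge1$, and let $v_1,\dots,v_N\in\mathbb R^d$, not all zero, with $d=\dim(\operatorname{span}\{v_1,\dots,v_N\})$. For $i\ne j$ let $a_{ij}:\mathbb R^d\to[0,\infty)$ be continuous. Let $(X,L)$ be the Harris irreducible continuous-time Markov process on $\mathcal S\times\mathbb R^d$ with generator \[Af(j,l)=v_j\cdot\nabla_l f(j,l)+\sum_{i\neq j}a_{ji}(l)\,[f(i,l)-f(j,l)].\] Let $p_1,\dots,p_N>0$ with $\sum_jp_j=1$ and let $g:\mathbb R^d\to[0,\infty)$ be differentiable with $\int_{\mathbb R^d}g=1$. If the probability measure $p_j\,g(l)\,dj\,dl$ is invariant for $(X,L)$, then $\sum_{j\in\mathcal S}p_jv_j=0$.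
   Context: The process: $L(t)=L(0)+\sum_j v_j\,\mu(\{s\in[0,t]:X(s)=j\})$ with $\mu$ Lebesgue measure, and $X$ jumps from $i$ to $j$ at rate $a_{ij}(L(t))$. Harris irreducibility: there exist an open $U\subset\mathbb R^d$ and $j_0\in\mathcal S$ such that from every starting point, $P((X(t),L(t))\in\{j_0\}\times U)>0$ for some $t>0$. *)

theory Defs
  imports "HOL-Probability.Probability"
begin

definition test_fun :: "nat \<Rightarrow> (nat \<Rightarrow> 'a::euclidean_space \<Rightarrow> real) \<Rightarrow> bool" where
  "test_fun N f \<longleftrightarrow>
     (\<forall>j\<in>{1..N}. (\<forall>l. f j differentiable (at l))
        \<and> (\<forall>b\<in>Basis. continuous_on UNIV (\<lambda>l. frechet_derivative (f j) (at l) b))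
        \<and> (\<exists>K. compact K \<and> (\<forall>l. l \<notin> K \<longrightarrow> f j l = 0)))"

definition gen :: "nat \<Rightarrow> (nat \<Rightarrow> 'a::euclidean_space) \<Rightarrow> (nat \<Rightarrow> nat \<Rightarrow> 'a \<Rightarrow> real)
                   \<Rightarrow> (nat \<Rightarrow> 'a \<Rightarrow> real) \<Rightarrow> nat \<Rightarrow> 'a \<Rightarrow> real" where
  "gen N v a f j l =
     frechet_derivative (f j) (at l) (v j)
     + (\<Sum>i\<in>{1..N} - {j}. a j i l * (f i l - f j l))"

definition pdmp_solution ::
  "nat \<Rightarrow> (nat \<Rightarrow> 'a::euclidean_space) \<Rightarrow> (nat \<Rightarrow> nat \<Rightarrow> 'a \<Rightarrow> real)
   \<Rightarrow> 'w measure \<Rightarrow> (real \<Rightarrow> 'w measure) \<Rightarrow> (real \<Rightarrow> 'w \<Rightarrow> nat) \<Rightarrow> (real \<Rightarrow> 'w \<Rightarrow> 'a) \<Rightarrow> bool"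
where
  "pdmp_solution N v a M F X L \<longleftrightarrow>
     prob_space M
   \<and> (\<forall>t\<ge>0. subalgebra M (F t))
   \<and> (\<forall>s t. 0 \<le> s \<and> s \<le> t \<longrightarrow> sets (F s) \<subseteq> sets (F t))
   \<and> (\<forall>t\<ge>0. X t \<in> measurable (F t) (count_space UNIV) \<and> L t \<in> borel_measurable (F t))
   \<and> (\<forall>\<omega>\<in>space M. \<forall>t\<ge>0. X t \<omega> \<in> {1..N})
   \<and> (\<forall>\<omega>\<in>space M. \<forall>t\<ge>0. eventually (\<lambda>s. X s \<omega> = X t \<omega>) (at_right t))
   \<and> (\<forall>\<omega>\<in>space M. \<forall>t\<ge>0.
        L t \<omega> = L 0 \<omega> + (\<Sum>j\<in>{1..N}. measure lborel {s\<in>{0..t}. X s \<omega> = j} *\<^sub>R v j))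
   \<and> (\<forall>f. test_fun N f \<longrightarrow>
        (\<forall>s t. 0 \<le> s \<and> s \<le> t \<longrightarrow>
          (let h = (\<lambda>\<omega>. f (X t \<omega>) (L t \<omega>) - f (X s \<omega>) (L s \<omega>)
                       - (LINT u:{s..t}|lborel. gen N v a f (X u \<omega>) (L u \<omega>)))
           in integrable M h \<and> (\<forall>A\<in>sets (F s). (LINT \<omega>:A|M. h \<omega>) = 0))))"

definition harris_irreducible ::
  "nat \<Rightarrow> (nat \<Rightarrow> 'a::euclidean_space) \<Rightarrow> (nat \<Rightarrow> nat \<Rightarrow> 'a \<Rightarrow> real) \<Rightarrow> 'w itself \<Rightarrow> bool"
where
  "harris_irreducible N v a (_::'w itself) \<longleftrightarrow>
     (\<exists>U j0. open U \<and> j0 \<in> {1..N} \<and>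
        (\<forall>(M::'w measure) F X L j l.
            pdmp_solution N v a M F X L \<and> j \<in> {1..N}
            \<and> (\<forall>\<omega>\<in>space M. X 0 \<omega> = j \<and> L 0 \<omega> = l)
          \<longrightarrow> (\<exists>t>0. measure M {\<omega>\<in>space M. X t \<omega> = j0 \<and> L t \<omega> \<in> U} > 0)))"

definition invariant_law ::
  "nat \<Rightarrow> (nat \<Rightarrow> 'a::euclidean_space) \<Rightarrow> (nat \<Rightarrow> nat \<Rightarrow> 'a \<Rightarrow> real) \<Rightarrow> 'w itself
   \<Rightarrow> (nat \<Rightarrow> real) \<Rightarrow> ('a \<Rightarrow> real) \<Rightarrow> bool"
where
  "invariant_law N v a (_::'w itself) p g \<longleftrightarrow>
     (\<exists>(M::'w measure) F X L. pdmp_solution N v a M F X L \<and>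
        (\<forall>t\<ge>0. \<forall>j\<in>{1..N}. \<forall>B\<in>sets borel.
           measure M {\<omega>\<in>space M. X t \<omega> = j \<and> L t \<omega> \<in> B} = p j * (LINT l:B|lborel. g l)))"

end

theory Submission
  imports Defs
begin

text \<open>
  Test the invariant law against the linear function l \<mapsto> l \<bullet> w with w = \<Sum>j p_j v_j.
  Since L(1) - L(0) = \<Sum>j v_j Leb{s \<in> [0,1] : X s = j} and X s has law p at every time,
  Fubini gives E[(L(1) - L(0)) \<bullet> w] = \<Sum>j p_j (v_j \<bullet> w) = |w|^2. On the other hand
  L(1) and L(0) have the same law and their difference is bounded, so the expected
  increment of L \<bullet> w vanishes. Hence w = 0.
\<close>

text \<open>
  A right-constant process is recovered from its values at the countably many dyadic times
  just above s, which makes (\<omega>, s) \<mapsto> X s \<omega> jointly measurable. The max 0 keeps these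
  times nonnegative for every real s, so that only X at nonnegative times is sampled.
\<close>

definition dyadic_above :: "nat \<Rightarrow> real \<Rightarrow> real" where
  "dyadic_above n s = max 0 ((of_int \<lfloor>s * 2^n\<rfloor> + 1) / 2^n)"

lemma dyadic_above_bounds:
  assumes "0 \<le> s"
  shows "s < dyadic_above n s" "dyadic_above n s \<le> s + 1 / 2^n"
proof -
  have "s * 2^n < of_int \<lfloor>s * 2^n\<rfloor> + 1" "of_int \<lfloor>s * 2^n\<rfloor> \<le> s * 2^n"
    by linarith+
  then have "s < (of_int \<lfloor>s * 2^n\<rfloor> + 1) / 2^n" "(of_int \<lfloor>s * 2^n\<rfloor> + 1) / 2^n \<le> s + 1 / 2^n"
    by (simp_all add: field_simps)
  with assms show "s < dyadic_above n s" "dyadic_above n s \<le> s + 1 / 2^n"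
    unfolding dyadic_above_def by auto
qed

lemma filterlim_dyadic_above:
  assumes "0 \<le> s"
  shows "filterlim (\<lambda>n. dyadic_above n s) (at_right s) sequentially"
proof (rule tendsto_imp_filterlim_at_right)
  have upper: "(\<lambda>n. s + 1 / 2^n) \<longlonglongrightarrow> s"
    using tendsto_add[OF tendsto_const LIMSEQ_divide_realpow_zero[of 2 1]] by simp
  show "(\<lambda>n. dyadic_above n s) \<longlonglongrightarrow> s"
  proof (rule tendsto_sandwich[OF _ _ tendsto_const upper])
    show "\<forall>\<^sub>F n in sequentially. s \<le> dyadic_above n s"
      using dyadic_above_bounds(1)[OF assms] by (simp add: less_imp_le)
    show "\<forall>\<^sub>F n in sequentially. dyadic_above n s \<le> s + 1 / 2^n"
      using dyadic_above_bounds(2)[OF assms] by simp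
  qed
  show "\<forall>\<^sub>F n in sequentially. s < dyadic_above n s"
    using dyadic_above_bounds(1)[OF assms] by simp
qed

lemma measurable_dyadic_sample[measurable]:
  fixes X :: "real \<Rightarrow> 'w \<Rightarrow> 'c"
  assumes "\<And>t. 0 \<le> t \<Longrightarrow> X t \<in> measurable M (count_space UNIV)"
  shows "(\<lambda>x. X (dyadic_above n (snd x)) (fst x)) \<in> measurable (M \<Otimes>\<^sub>M lborel) (count_space UNIV)"
proof -
  have "(\<lambda>x. X (max 0 ((of_int i + 1) / 2^n)) (fst x)) \<in> measurable (M \<Otimes>\<^sub>M lborel) (count_space UNIV)"
    for i :: int
    using assms by (intro measurable_compose[OF measurable_fst]) simp
  moreover have "(\<lambda>x. \<lfloor>snd x * 2 ^ n\<rfloor>) \<in> measurable (M \<Otimes>\<^sub>M (lborel :: real measure)) (count_space UNIV)"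
    by measurable
  ultimately show ?thesis
    unfolding dyadic_above_def by (rule measurable_compose_countable)
qed

lemma sets_pair_right_constant_process:
  fixes X :: "real \<Rightarrow> 'w \<Rightarrow> 'c"
  assumes meas: "\<And>t. 0 \<le> t \<Longrightarrow> X t \<in> measurable M (count_space UNIV)"
    and right_const: "\<And>\<omega> t. \<omega> \<in> space M \<Longrightarrow> 0 \<le> t \<Longrightarrow> \<forall>\<^sub>F s in at_right t. X s \<omega> = X t \<omega>"
  shows "{x \<in> space (M \<Otimes>\<^sub>M lborel). 0 \<le> snd x \<and> X (snd x) (fst x) = j} \<in> sets (M \<Otimes>\<^sub>M lborel)"
proof -
  have sample_iff: "X s \<omega> = j \<longleftrightarrow> (\<exists>n0. \<forall>n\<ge>n0. X (dyadic_above n s) \<omega> = j)"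
    if "\<omega> \<in> space M" "0 \<le> s" for \<omega> s
  proof -
    have samples: "\<forall>\<^sub>F n in sequentially. X (dyadic_above n s) \<omega> = X s \<omega>"
      using filterlim_dyadic_above[OF \<open>0 \<le> s\<close>] right_const[OF that] unfolding filterlim_iff by blast
    have "X s \<omega> = j \<longleftrightarrow> (\<forall>\<^sub>F n in sequentially. X (dyadic_above n s) \<omega> = j)"
    proof
      assume "\<forall>\<^sub>F n in sequentially. X (dyadic_above n s) \<omega> = j"
      with samples have "\<forall>\<^sub>F n in sequentially. X s \<omega> = j"
        by eventually_elim simp
      then show "X s \<omega> = j" by simp
    qed (use samples in \<open>auto elim: eventually_mono\<close>)
    then show ?thesis by (simp add: eventually_sequentially)
  qed
  have "{x \<in> space (M \<Otimes>\<^sub>M lborel). 0 \<le> snd x \<and> X (snd x) (fst x) = j} =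
      {x \<in> space (M \<Otimes>\<^sub>M lborel). 0 \<le> snd x \<and> (\<exists>n0. \<forall>n\<ge>n0. X (dyadic_above n (snd x)) (fst x) = j)}"
    by (intro Collect_cong conj_cong refl sample_iff) (auto simp: space_pair_measure)
  also have "\<dots> \<in> sets (M \<Otimes>\<^sub>M lborel)"
    using meas by measurable
  finally show ?thesis .
qed

definition occupation_time :: "(real \<Rightarrow> 'w \<Rightarrow> 'c) \<Rightarrow> 'c \<Rightarrow> real \<Rightarrow> 'w \<Rightarrow> real" where
  "occupation_time X j t \<omega> = measure lborel {s \<in> {0..t}. X s \<omega> = j}"

lemma occupation_time_nonneg: "0 \<le> occupation_time X j t \<omega>"
  by (simp add: occupation_time_def)

lemma emeasure_eq_occupation_time:
  assumes "0 \<le> t"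
  shows "emeasure lborel {s \<in> {0..t}. X s \<omega> = j} = ennreal (occupation_time X j t \<omega>)"
proof -
  have "emeasure lborel {s \<in> {0..t}. X s \<omega> = j} \<le> emeasure lborel {0..t}"
    by (rule emeasure_mono) auto
  then have "emeasure lborel {s \<in> {0..t}. X s \<omega> = j} \<noteq> \<top>"
    using assms by (auto simp: top_unique)
  then show ?thesis
    unfolding occupation_time_def by (rule emeasure_eq_ennreal_measure)
qed

lemma occupation_time_le:
  assumes "0 \<le> t"
  shows "occupation_time X j t \<omega> \<le> t"
proof -
  have "ennreal (occupation_time X j t \<omega>) \<le> emeasure lborel {0..t}"
    unfolding emeasure_eq_occupation_time[OF assms, symmetric] by (rule emeasure_mono) auto
  then show ?thesis
    using assms by simp
qed

lemma
  fixes X :: "real \<Rightarrow> 'w \<Rightarrow> 'c"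
  assumes meas: "\<And>t. 0 \<le> t \<Longrightarrow> X t \<in> measurable M (count_space UNIV)"
    and right_const: "\<And>\<omega> t. \<omega> \<in> space M \<Longrightarrow> 0 \<le> t \<Longrightarrow> \<forall>\<^sub>F s in at_right t. X s \<omega> = X t \<omega>"
  shows sets_pair_occupation:
      "{x \<in> space (M \<Otimes>\<^sub>M lborel). snd x \<in> {0..t} \<and> X (snd x) (fst x) = j} \<in> sets (M \<Otimes>\<^sub>M lborel)"
    and borel_measurable_occupation_time: "occupation_time X j t \<in> borel_measurable M"
proof -
  have "{x \<in> space (M \<Otimes>\<^sub>M lborel). snd x \<in> {0..t} \<and> X (snd x) (fst x) = j} =
      {x \<in> space (M \<Otimes>\<^sub>M lborel). 0 \<le> snd x \<and> X (snd x) (fst x) = j} \<inter>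
      {x \<in> space (M \<Otimes>\<^sub>M lborel). snd x \<le> t}"
    by auto
  also have "\<dots> \<in> sets (M \<Otimes>\<^sub>M lborel)"
    using sets_pair_right_constant_process[OF meas right_const] by measurable
  finally show occ: "{x \<in> space (M \<Otimes>\<^sub>M lborel). snd x \<in> {0..t} \<and> X (snd x) (fst x) = j} \<in> sets (M \<Otimes>\<^sub>M lborel)" .
  have "(\<lambda>\<omega>. emeasure lborel {s \<in> {0..t}. X s \<omega> = j}) \<in> borel_measurable M"
    using occ by (intro sigma_finite_measure.measurable_emeasure[OF sigma_finite_lborel]) auto
  then show "occupation_time X j t \<in> borel_measurable M"
    unfolding occupation_time_def measure_def by measurable
qed

lemma nn_integral_occupation_time:
  fixes X :: "real \<Rightarrow> 'w \<Rightarrow> 'c"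
  assumes "sigma_finite_measure M"
    and meas: "\<And>t. 0 \<le> t \<Longrightarrow> X t \<in> measurable M (count_space UNIV)"
    and right_const: "\<And>\<omega> t. \<omega> \<in> space M \<Longrightarrow> 0 \<le> t \<Longrightarrow> \<forall>\<^sub>F s in at_right t. X s \<omega> = X t \<omega>"
  shows "(\<integral>\<^sup>+\<omega>. emeasure lborel {s \<in> {0..t}. X s \<omega> = j} \<partial>M) =
    (\<integral>\<^sup>+s\<in>{0..t}. emeasure M {\<omega> \<in> space M. X s \<omega> = j} \<partial>lborel)"
proof -
  interpret pair_sigma_finite M "lborel :: real measure"
    using assms(1) by (simp add: pair_sigma_finite_def sigma_finite_lborel)
  define S where "S = {x \<in> space (M \<Otimes>\<^sub>M lborel). snd x \<in> {0..t} \<and> X (snd x) (fst x) = j}"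
  have S: "S \<in> sets (M \<Otimes>\<^sub>M lborel)"
    unfolding S_def using meas right_const by (rule sets_pair_occupation)
  have "(\<integral>\<^sup>+\<omega>. emeasure lborel {s \<in> {0..t}. X s \<omega> = j} \<partial>M) = (\<integral>\<^sup>+\<omega>. emeasure lborel (Pair \<omega> -` S) \<partial>M)"
    by (intro nn_integral_cong arg_cong[where f="emeasure lborel"]) (auto simp: S_def space_pair_measure)
  also have "\<dots> = emeasure (M \<Otimes>\<^sub>M lborel) S"
    by (rule sigma_finite_measure.emeasure_pair_measure_alt[OF sigma_finite_lborel S, symmetric])
  also have "\<dots> = (\<integral>\<^sup>+s. emeasure M ((\<lambda>\<omega>. (\<omega>, s)) -` S) \<partial>lborel)"
    by (rule emeasure_pair_measure_alt2[OF S])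
  also have "\<dots> = (\<integral>\<^sup>+s\<in>{0..t}. emeasure M {\<omega> \<in> space M. X s \<omega> = j} \<partial>lborel)"
    by (intro nn_integral_cong) (auto simp: S_def space_pair_measure split: split_indicator)
  finally show ?thesis .
qed

lemma
  fixes X :: "real \<Rightarrow> 'w \<Rightarrow> 'c"
  assumes "finite_measure M" "0 \<le> t"
    and meas: "\<And>t. 0 \<le> t \<Longrightarrow> X t \<in> measurable M (count_space UNIV)"
    and right_const: "\<And>\<omega> t. \<omega> \<in> space M \<Longrightarrow> 0 \<le> t \<Longrightarrow> \<forall>\<^sub>F s in at_right t. X s \<omega> = X t \<omega>"
    and marginal: "\<And>s. s \<in> {0..t} \<Longrightarrow> measure M {\<omega> \<in> space M. X s \<omega> = j} = q"
  shows integrable_occupation_time: "integrable M (occupation_time X j t)"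
    and integral_occupation_time: "(\<integral>\<omega>. occupation_time X j t \<omega> \<partial>M) = t * q"
proof -
  interpret finite_measure M by fact
  have occ_meas: "occupation_time X j t \<in> borel_measurable M"
    using meas right_const by (rule borel_measurable_occupation_time)
  show "integrable M (occupation_time X j t)"
    using occ_meas by (intro integrable_const_bound[where B=t] AE_I2)
      (simp_all add: abs_of_nonneg occupation_time_nonneg occupation_time_le[OF \<open>0 \<le> t\<close>])
  have "0 \<le> q"
    using marginal[of 0] \<open>0 \<le> t\<close> by auto
  have "(\<integral>\<^sup>+\<omega>. ennreal (occupation_time X j t \<omega>) \<partial>M) = (\<integral>\<^sup>+\<omega>. emeasure lborel {s \<in> {0..t}. X s \<omega> = j} \<partial>M)"
    by (intro nn_integral_cong) (rule emeasure_eq_occupation_time[OF \<open>0 \<le> t\<close>, symmetric])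
  also have "\<dots> = (\<integral>\<^sup>+s\<in>{0..t}. emeasure M {\<omega> \<in> space M. X s \<omega> = j} \<partial>lborel)"
    by (rule nn_integral_occupation_time[OF sigma_finite_measure meas right_const])
  also have "\<dots> = (\<integral>\<^sup>+s\<in>{0..t}. ennreal q \<partial>lborel)"
    by (intro nn_integral_cong) (simp add: emeasure_eq_measure marginal split: split_indicator)
  also have "\<dots> = ennreal (t * q)"
    using \<open>0 \<le> t\<close> \<open>0 \<le> q\<close> by (simp add: nn_integral_cmult_indicator ennreal_mult mult.commute)
  finally show "(\<integral>\<omega>. occupation_time X j t \<omega> \<partial>M) = t * q"
    using occ_meas \<open>0 \<le> t\<close> \<open>0 \<le> q\<close> by (simp add: integral_eq_nn_integral occupation_time_nonneg)
qed

lemma integral_diff_eq_0_if_distr_eq: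
  fixes Y0 Y1 :: "'w \<Rightarrow> real"
  assumes "finite_measure M"
    and [measurable]: "Y0 \<in> borel_measurable M" "Y1 \<in> borel_measurable M"
    and same_law: "distr M borel Y1 = distr M borel Y0"
    and bounded: "\<And>\<omega>. \<omega> \<in> space M \<Longrightarrow> \<bar>Y1 \<omega> - Y0 \<omega>\<bar> \<le> C"
  shows "(\<integral>\<omega>. Y1 \<omega> - Y0 \<omega> \<partial>M) = 0"
proof -
  interpret finite_measure M by fact
  \<comment> \<open>Y0 and Y1 need not be integrable: compare them after truncation at level n,
    then let n tend to infinity by dominated convergence.\<close>
  define trunc :: "nat \<Rightarrow> real \<Rightarrow> real" where "trunc n x = max (- real n) (min (real n) x)" for n x
  have trunc_meas [measurable]: "trunc n \<in> borel_measurable borel" for n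
    unfolding trunc_def by measurable
  have trunc_integrable: "integrable M (\<lambda>\<omega>. trunc n (Y \<omega>))" if [measurable]: "Y \<in> borel_measurable M" for Y n
    by (intro integrable_const_bound[where B="real n"] AE_I2) (auto simp: trunc_def)
  have "(\<integral>\<omega>. trunc n (Y1 \<omega>) \<partial>M) = (\<integral>\<omega>. trunc n (Y0 \<omega>) \<partial>M)" for n
    using same_law by (metis (no_types) integral_distr assms(2,3) trunc_meas)
  then have truncated: "(\<integral>\<omega>. trunc n (Y1 \<omega>) - trunc n (Y0 \<omega>) \<partial>M) = 0" for n
    using trunc_integrable[of Y1 n] trunc_integrable[of Y0 n] by simp
  have "(\<lambda>n. \<integral>\<omega>. trunc n (Y1 \<omega>) - trunc n (Y0 \<omega>) \<partial>M) \<longlonglongrightarrow> (\<integral>\<omega>. Y1 \<omega> - Y0 \<omega> \<partial>M)"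
  proof (rule integral_dominated_convergence[where w="\<lambda>_. C"])
    show "AE \<omega> in M. (\<lambda>n. trunc n (Y1 \<omega>) - trunc n (Y0 \<omega>)) \<longlonglongrightarrow> Y1 \<omega> - Y0 \<omega>"
    proof (rule AE_I2, rule tendsto_eventually, unfold eventually_sequentially, intro exI allI impI)
      fix \<omega> n assume "nat \<lceil>max \<bar>Y1 \<omega>\<bar> \<bar>Y0 \<omega>\<bar>\<rceil> \<le> n"
      then show "trunc n (Y1 \<omega>) - trunc n (Y0 \<omega>) = Y1 \<omega> - Y0 \<omega>"
        unfolding trunc_def by linarith
    qed
    show "AE \<omega> in M. norm (trunc n (Y1 \<omega>) - trunc n (Y0 \<omega>)) \<le> C" for n
      using bounded by (intro AE_I2) (force simp: trunc_def)
  qed simp_all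
  with truncated show ?thesis
    using LIMSEQ_unique by (simp add: LIMSEQ_const_iff)
qed

lemma distr_eq_if_joint_measures_eq:
  assumes "finite_measure M" "finite J"
    and [measurable]: "X \<in> measurable M (count_space UNIV)" "L \<in> borel_measurable M"
      "X' \<in> measurable M (count_space UNIV)" "L' \<in> borel_measurable M"
    and range: "\<And>\<omega>. \<omega> \<in> space M \<Longrightarrow> X \<omega> \<in> J" "\<And>\<omega>. \<omega> \<in> space M \<Longrightarrow> X' \<omega> \<in> J"
    and joint: "\<And>j B. j \<in> J \<Longrightarrow> B \<in> sets borel \<Longrightarrow>
      measure M {\<omega> \<in> space M. X \<omega> = j \<and> L \<omega> \<in> B} = measure M {\<omega> \<in> space M. X' \<omega> = j \<and> L' \<omega> \<in> B}"
  shows "distr M borel L = distr M borel L'"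
proof -
  interpret finite_measure M by fact
  have total_prob: "measure M (L -` B \<inter> space M) = (\<Sum>j\<in>J. measure M {\<omega> \<in> space M. X \<omega> = j \<and> L \<omega> \<in> B})"
    if [measurable]: "X \<in> measurable M (count_space UNIV)" "L \<in> borel_measurable M" "B \<in> sets borel"
      and "\<And>\<omega>. \<omega> \<in> space M \<Longrightarrow> X \<omega> \<in> J"
    for X :: "'a \<Rightarrow> 'b" and L :: "'a \<Rightarrow> 'c" and B
  proof -
    have "L -` B \<inter> space M = (\<Union>j\<in>J. {\<omega> \<in> space M. X \<omega> = j \<and> L \<omega> \<in> B})"
      using that(4) by auto
    moreover have "{\<omega> \<in> space M. X \<omega> = j \<and> L \<omega> \<in> B} \<in> sets M" for j
      by measurable
    ultimately show ?thesis
      using \<open>finite J\<close> by (auto intro!: measure_finite_Union simp: disjoint_family_on_def)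
  qed
  show ?thesis
  proof (rule measure_eqI)
    fix B assume "B \<in> sets (distr M borel L)"
    then have [measurable]: "B \<in> sets borel" by simp
    show "emeasure (distr M borel L) B = emeasure (distr M borel L') B"
      using total_prob[of X L B] total_prob[of X' L' B] range joint
      by (simp add: emeasure_distr emeasure_eq_measure)
  qed simp
qed

lemma mean_velocity_eq_0_if_position_stationary:
  fixes X :: "real \<Rightarrow> 'w \<Rightarrow> 'c" and L :: "real \<Rightarrow> 'w \<Rightarrow> 'a::euclidean_space"
  assumes "prob_space M" "0 < t"
    and X_meas: "\<And>s. 0 \<le> s \<Longrightarrow> X s \<in> measurable M (count_space UNIV)"
    and right_const: "\<And>\<omega> s. \<omega> \<in> space M \<Longrightarrow> 0 \<le> s \<Longrightarrow> \<forall>\<^sub>F r in at_right s. X r \<omega> = X s \<omega>"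
    and L_meas [measurable]: "L 0 \<in> borel_measurable M" "L t \<in> borel_measurable M"
    and path: "\<And>\<omega>. \<omega> \<in> space M \<Longrightarrow> L t \<omega> = L 0 \<omega> + (\<Sum>j\<in>J. occupation_time X j t \<omega> *\<^sub>R v j)"
    and marginal: "\<And>s j. 0 \<le> s \<Longrightarrow> j \<in> J \<Longrightarrow> measure M {\<omega> \<in> space M. X s \<omega> = j} = p j"
    and stationary: "distr M borel (L t) = distr M borel (L 0)"
  shows "(\<Sum>j\<in>J. p j *\<^sub>R v j) = 0"
proof -
  interpret prob_space M by fact
  define w where "w = (\<Sum>j\<in>J. p j *\<^sub>R v j)"
  define Y where "Y s \<omega> = L s \<omega> \<bullet> w" for s \<omega>
  have Y_meas [measurable]: "Y 0 \<in> borel_measurable M" "Y t \<in> borel_measurable M"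
    unfolding Y_def by measurable
  have increment: "Y t \<omega> - Y 0 \<omega> = (\<Sum>j\<in>J. occupation_time X j t \<omega> * (v j \<bullet> w))" if "\<omega> \<in> space M" for \<omega>
    using path[OF that] by (simp add: Y_def inner_add_left inner_sum_left)
  have occ: "integrable M (occupation_time X j t)" "(\<integral>\<omega>. occupation_time X j t \<omega> \<partial>M) = t * p j"
    if "j \<in> J" for j
    using \<open>0 < t\<close> X_meas right_const marginal[OF _ that]
    by (auto intro!: integrable_occupation_time integral_occupation_time finite_measure_axioms)
  have "(\<integral>\<omega>. Y t \<omega> - Y 0 \<omega> \<partial>M) = (\<integral>\<omega>. (\<Sum>j\<in>J. occupation_time X j t \<omega> * (v j \<bullet> w)) \<partial>M)"
    by (rule Bochner_Integration.integral_cong) (simp_all add: increment)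
  also have "\<dots> = (\<Sum>j\<in>J. t * p j * (v j \<bullet> w))"
    using occ by (simp add: integral_sum)
  also have "\<dots> = t * (w \<bullet> w)"
    by (simp add: w_def inner_sum_left sum_distrib_left mult.assoc)
  finally have "t * (w \<bullet> w) = (\<integral>\<omega>. Y t \<omega> - Y 0 \<omega> \<partial>M)" ..
  also have "\<dots> = 0"
  proof (rule integral_diff_eq_0_if_distr_eq[OF finite_measure_axioms Y_meas])
    have inner_meas: "(\<lambda>l. l \<bullet> w) \<in> borel_measurable borel"
      by measurable
    show "distr M borel (Y t) = distr M borel (Y 0)"
      using distr_distr[OF inner_meas L_meas(1)] distr_distr[OF inner_meas L_meas(2)] stationary
      unfolding Y_def[abs_def] by (simp add: comp_def)
    show "\<bar>Y t \<omega> - Y 0 \<omega>\<bar> \<le> (\<Sum>j\<in>J. t * \<bar>v j \<bullet> w\<bar>)" if "\<omega> \<in> space M" for \<omega>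
      unfolding increment[OF that]
      using \<open>0 < t\<close> by (intro order.trans[OF sum_abs] sum_mono)
        (simp add: abs_mult abs_of_nonneg occupation_time_nonneg occupation_time_le mult_right_mono)
  qed
  finally show ?thesis
    using \<open>0 < t\<close> by (simp add: w_def)
qed

lemma pdmp_solutionD:
  assumes "pdmp_solution N v a M F X L"
  shows pdmp_solution_prob_space: "prob_space M"
    and pdmp_solution_measurable_X: "0 \<le> t \<Longrightarrow> X t \<in> measurable M (count_space UNIV)"
    and pdmp_solution_measurable_L: "0 \<le> t \<Longrightarrow> L t \<in> borel_measurable M"
    and pdmp_solution_range: "\<omega> \<in> space M \<Longrightarrow> 0 \<le> t \<Longrightarrow> X t \<omega> \<in> {1..N}"
    and pdmp_solution_right_const:
      "\<omega> \<in> space M \<Longrightarrow> 0 \<le> t \<Longrightarrow> \<forall>\<^sub>F s in at_right t. X s \<omega> = X t \<omega>"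
    and pdmp_solution_path: "\<omega> \<in> space M \<Longrightarrow> 0 \<le> t \<Longrightarrow>
      L t \<omega> = L 0 \<omega> + (\<Sum>j\<in>{1..N}. occupation_time X j t \<omega> *\<^sub>R v j)"
proof -
  obtain prob: "prob_space M"
    and subalgebras: "\<forall>t\<ge>0. subalgebra M (F t)"
    and adapted: "\<forall>t\<ge>0. X t \<in> measurable (F t) (count_space UNIV) \<and> L t \<in> borel_measurable (F t)"
    and range: "\<forall>\<omega>\<in>space M. \<forall>t\<ge>0. X t \<omega> \<in> {1..N}"
    and right_const: "\<forall>\<omega>\<in>space M. \<forall>t\<ge>0. \<forall>\<^sub>F s in at_right t. X s \<omega> = X t \<omega>"
    and path: "\<forall>\<omega>\<in>space M. \<forall>t\<ge>0.
      L t \<omega> = L 0 \<omega> + (\<Sum>j\<in>{1..N}. measure lborel {s \<in> {0..t}. X s \<omega> = j} *\<^sub>R v j)"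
    using assms unfolding pdmp_solution_def by (elim conjE) (rule that; assumption)
  show "prob_space M"
    by (fact prob)
  show "0 \<le> t \<Longrightarrow> X t \<in> measurable M (count_space UNIV)" "0 \<le> t \<Longrightarrow> L t \<in> borel_measurable M"
    using subalgebras adapted measurable_from_subalg by blast+
  show "\<omega> \<in> space M \<Longrightarrow> 0 \<le> t \<Longrightarrow> X t \<omega> \<in> {1..N}"
    and "\<omega> \<in> space M \<Longrightarrow> 0 \<le> t \<Longrightarrow> \<forall>\<^sub>F s in at_right t. X s \<omega> = X t \<omega>"
    using range right_const by blast+
  show "\<omega> \<in> space M \<Longrightarrow> 0 \<le> t \<Longrightarrow>
      L t \<omega> = L 0 \<omega> + (\<Sum>j\<in>{1..N}. occupation_time X j t \<omega> *\<^sub>R v j)"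
    unfolding occupation_time_def using path by blast
qed

theorem corollary2p2:
  fixes N :: nat and v :: "nat \<Rightarrow> 'a::euclidean_space"
    and a :: "nat \<Rightarrow> nat \<Rightarrow> 'a \<Rightarrow> real"
    and p :: "nat \<Rightarrow> real" and g :: "'a \<Rightarrow> real"
  assumes "N > 1"
    and "\<exists>j\<in>{1..N}. v j \<noteq> 0"
    and "dim (v ` {1..N}) = DIM('a)"
    and "\<forall>i\<in>{1..N}. \<forall>j\<in>{1..N}. i \<noteq> j \<longrightarrow> continuous_on UNIV (a i j) \<and> (\<forall>l. a i j l \<ge> 0)"
    and "harris_irreducible N v a TYPE('w)"
    and "\<forall>j\<in>{1..N}. p j > 0"
    and "(\<Sum>j\<in>{1..N}. p j) = 1"
    and "\<forall>l. g l \<ge> 0"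
    and "\<forall>l. g differentiable (at l)"
    and "integrable lborel g"
    and "(LINT l|lborel. g l) = 1"
    and "invariant_law N v a TYPE('w) p g"
  shows "(\<Sum>j\<in>{1..N}. p j *\<^sub>R v j) = 0"
proof -
  obtain M :: "'w measure" and F X L where sol: "pdmp_solution N v a M F X L"
    and joint: "\<And>t j B. 0 \<le> t \<Longrightarrow> j \<in> {1..N} \<Longrightarrow> B \<in> sets borel \<Longrightarrow>
      measure M {\<omega> \<in> space M. X t \<omega> = j \<and> L t \<omega> \<in> B} = p j * (LINT l:B|lborel. g l)"
    using assms(12) unfolding invariant_law_def by blast
  note prob = pdmp_solution_prob_space[OF sol]
    and X_meas = pdmp_solution_measurable_X[OF sol]
    and L_meas = pdmp_solution_measurable_L[OF sol]
  have marginal: "measure M {\<omega> \<in> space M. X s \<omega> = j} = p j" if "0 \<le> s" "j \<in> {1..N}" for s j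
    using joint[OF that, of UNIV] assms(11) by (simp add: set_lebesgue_integral_def)
  have stationary: "distr M borel (L 1) = distr M borel (L 0)"
    using X_meas L_meas pdmp_solution_range[OF sol] joint
    by (intro distr_eq_if_joint_measures_eq[where J="{1..N}" and X="X 1" and X'="X 0"]
        prob_space.finite_measure[OF prob]) auto
  show ?thesis
    by (rule mean_velocity_eq_0_if_position_stationary[OF prob zero_less_one X_meas
          pdmp_solution_right_const[OF sol] L_meas[OF order_refl] L_meas[OF zero_le_one]
          pdmp_solution_path[OF sol _ zero_le_one] marginal stationary])
qed

end
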